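(* Every $4$-edge-connected graph $G$ with at most $5$ vertices satisfies $\phi(G)<3$.
   Context: Graphs may have parallel edges but no loops. The flow index $\phi(G)$ is the least rational $k/d$ such that $G$ admits a circular $k/d$-flow, i.e. an orientation with an integer flow (conservation at every vertex) whose values lie in $\{\pm d,\pm(d+1),\dots,\pm(k-d)\}$. Equivalently, $\phi(G)<3$ iff $G$ has a strongly-connected orientation with outdegree $\equiv$ indegree $\pmod 3$ at every vertex. *)

theory Defs
  imports Complex_Main
begin

text \<open>A finite multigraph (parallel edges allowed, no loops) is given by a finite vertex
set V, a finite edge set E, and a map ends assigning to each edge its two endpoints
(in a fixed reference orientation, tail and head).\<close>

definition multigraph :: "'v set \<Rightarrow> 'e set \<Rightarrow> ('e \<Rightarrow> 'v \<times> 'v) \<Rightarrow> bool" where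
  "multigraph V E ends \<longleftrightarrow> finite V \<and> finite E \<and>
     (\<forall>e\<in>E. fst (ends e) \<in> V \<and> snd (ends e) \<in> V \<and> fst (ends e) \<noteq> snd (ends e))"

definition cut_edges :: "'e set \<Rightarrow> ('e \<Rightarrow> 'v \<times> 'v) \<Rightarrow> 'v set \<Rightarrow> 'e set" where
  "cut_edges E ends S = {e\<in>E. (fst (ends e) \<in> S) \<noteq> (snd (ends e) \<in> S)}"

definition k_edge_connected :: "nat \<Rightarrow> 'v set \<Rightarrow> 'e set \<Rightarrow> ('e \<Rightarrow> 'v \<times> 'v) \<Rightarrow> bool" where
  "k_edge_connected k V E ends \<longleftrightarrow>
     (\<forall>S. S \<subseteq> V \<and> S \<noteq> {} \<and> S \<noteq> V \<longrightarrow> card (cut_edges E ends S) \<ge> k)"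

text \<open>Circular k/d-flow: an integer flow w.r.t. the reference orientation (reversing an
edge negates its value, and the value set is symmetric) with |f e| in [d, k-d].\<close>
definition circular_flow :: "'v set \<Rightarrow> 'e set \<Rightarrow> ('e \<Rightarrow> 'v \<times> 'v) \<Rightarrow> int \<Rightarrow> int \<Rightarrow> bool" where
  "circular_flow V E ends k d \<longleftrightarrow>
     (\<exists>f :: 'e \<Rightarrow> int.
        (\<forall>e\<in>E. d \<le> \<bar>f e\<bar> \<and> \<bar>f e\<bar> \<le> k - d) \<and>
        (\<forall>v\<in>V. (\<Sum>e\<in>{e\<in>E. fst (ends e) = v}. f e) = (\<Sum>e\<in>{e\<in>E. snd (ends e) = v}. f e)))"

definition flow_index :: "'v set \<Rightarrow> 'e set \<Rightarrow> ('e \<Rightarrow> 'v \<times> 'v) \<Rightarrow> real" where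
  "flow_index V E ends =
     Inf {real_of_int k / real_of_int d | k d. 0 < d \<and> 2 * d \<le> k \<and> circular_flow V E ends k d}"

end

theory Submission
  imports Defs "HOL-Library.Transitive_Closure_Table"
begin

text \<open>Call an orientation balanced if every nontrivial cut has more than a third of its edges
in each direction, i.e. 3 |out(S) - in(S)| < d(S). For a balanced orientation, Hoffman's circulation
theorem gives an integer flow with value in [d, 2d-1] along every oriented edge (d large), so
\<phi>(G) \<le> (3d-1)/d < 3. Orientations with prescribed out(v) - in(v) = \<beta>(v) exist as soon as
\<beta> has the parity of the degrees, sums to 0 and satisfies \<beta>(S) \<le> d(S) (Hakimi; again Hoffman).
So it suffices to find \<beta> = +1 on a set P and -1 on a set N of odd-degree vertices with
3 |\<beta>(S)| < d(S). If there are at most two odd vertices, |\<beta>(S)| \<le> 1 and 4-edge-connectivity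
suffices. If there are four, they have degree at least 5, and counting shows that they split
into pairs {p,q}, {r,s} with d({p,q}), d({r,s}) \<ge> 7; with at most five vertices these are,
up to complement, the only cuts on which |\<beta>(S)| = 2.\<close>

lemma exists_negative_of_sum_eq_0:
  fixes g :: "'a \<Rightarrow> 'b::linordered_ab_group_add"
  assumes "finite A" "sum g A = 0" "v \<in> A" "g v \<noteq> 0"
  shows "\<exists>t\<in>A. g t < 0"
  using sum_nonneg_eq_0_iff[OF assms(1), of g] assms(2-4) by (meson not_less)

lemma separating_set_of_five:
  assumes "finite V" "card V \<le> 5" "distinct [p,q,r,s]" "{p,q,r,s} \<subseteq> V"
    and "S \<subseteq> V" "p \<in> S" "q \<in> S" "r \<notin> S" "s \<notin> S"
  shows "S = {p,q} \<or> V - S = {r,s}"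
proof -
  have "finite (S - {p,q})" "finite (V - S - {r,s})"
    using assms(1,5) by (auto intro: finite_subset)
  then have "card (S - {p,q}) + card (V - S - {r,s}) = card ((S - {p,q}) \<union> (V - S - {r,s}))"
    by (rule card_Un_disjoint[symmetric]) auto
  also have "\<dots> \<le> card (V - {p,q,r,s})"
    using assms(1,5-9) by (intro card_mono) auto
  also have "\<dots> \<le> 1"
    using assms(1-4) by (simp add: card_Diff_subset)
  finally have "card (S - {p,q}) + card (V - S - {r,s}) \<le> 1" .
  then have "card (S - {p,q}) = 0 \<or> card (V - S - {r,s}) = 0"
    by linarith
  then have "S - {p,q} = {} \<or> V - S - {r,s} = {}"
    using assms(1,5) by (meson card_0_eq finite_Diff finite_subset)
  then show ?thesis
    using assms(4-9) by auto
qed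

locale loopless_multigraph =
  fixes V :: "'v set" and E :: "'e set" and ends :: "'e \<Rightarrow> 'v \<times> 'v"
  assumes multigraph: "multigraph V E ends"
begin

lemma finite_V: "finite V"
  and finite_E: "finite E"
  and tail_in_V: "e \<in> E \<Longrightarrow> fst (ends e) \<in> V"
  and head_in_V: "e \<in> E \<Longrightarrow> snd (ends e) \<in> V"
  and tail_neq_head: "e \<in> E \<Longrightarrow> fst (ends e) \<noteq> snd (ends e)"
  using multigraph by (auto simp: multigraph_def)

definition incidence :: "'v set \<Rightarrow> 'e \<Rightarrow> int" where
  "incidence S e = (if fst (ends e) \<in> S then 1 else 0) - (if snd (ends e) \<in> S then 1 else 0)"

definition net_flow :: "('e \<Rightarrow> int) \<Rightarrow> 'v set \<Rightarrow> int" where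
  "net_flow f S = (\<Sum>e\<in>E. f e * incidence S e)"

definition cut_size :: "'v set \<Rightarrow> int" where
  "cut_size S = int (card (cut_edges E ends S))"

lemma cut_size_eq_sum_abs_incidence: "cut_size S = (\<Sum>e\<in>E. \<bar>incidence S e\<bar>)"
proof -
  have "cut_size S = (\<Sum>e\<in>E. if (fst (ends e) \<in> S) \<noteq> (snd (ends e) \<in> S) then 1 else 0)"
    unfolding cut_size_def cut_edges_def by (simp add: sum.inter_filter[OF finite_E, symmetric])
  also have "\<dots> = (\<Sum>e\<in>E. \<bar>incidence S e\<bar>)"
    by (rule sum.cong) (auto simp: incidence_def)
  finally show ?thesis .
qed

lemma cut_size_empty: "cut_size {} = 0"
  by (simp add: cut_size_def cut_edges_def)

lemma cut_size_V: "cut_size V = 0"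
  by (simp add: cut_size_eq_sum_abs_incidence incidence_def tail_in_V head_in_V)

lemma cut_size_le_card_E: "cut_size S \<le> int (card E)"
  unfolding cut_size_def cut_edges_def by (simp add: card_mono finite_E)

lemma cut_size_Diff: "cut_size (V - S) = cut_size S"
  unfolding cut_size_def cut_edges_def using tail_in_V head_in_V
  by (metis (no_types, lifting) Diff_iff)

lemma sum_incidence_singletons: "finite S \<Longrightarrow> (\<Sum>v\<in>S. incidence {v} e) = incidence S e"
  by (simp add: incidence_def sum_subtractf sum.delta')

lemma sum_net_flow_singletons: "finite S \<Longrightarrow> (\<Sum>v\<in>S. net_flow f {v}) = net_flow f S"
  unfolding net_flow_def
  by (subst sum.swap) (simp add: sum_distrib_left[symmetric] sum_incidence_singletons)

lemma net_flow_V: "net_flow f V = 0"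
  by (simp add: net_flow_def incidence_def tail_in_V head_in_V)

lemma net_flow_fun_upd:
  assumes "e \<in> E"
  shows "net_flow (f(e := f e + c)) S = net_flow f S + c * incidence S e"
proof -
  have "net_flow (f(e := f e + c)) S
      = (\<Sum>x\<in>E. f x * incidence S x + (if x = e then c * incidence S e else 0))"
    unfolding net_flow_def by (rule sum.cong) (auto simp: algebra_simps)
  then show ?thesis
    by (simp add: sum.distrib net_flow_def assms finite_E)
qed

lemma net_flow_singleton:
  "net_flow f {v} = (\<Sum>e\<in>{e\<in>E. fst (ends e) = v}. f e) - (\<Sum>e\<in>{e\<in>E. snd (ends e) = v}. f e)"
proof -
  have "net_flow f {v}
      = (\<Sum>e\<in>E. (if fst (ends e) = v then f e else 0) - (if snd (ends e) = v then f e else 0))"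
    unfolding net_flow_def by (rule sum.cong) (auto simp: incidence_def)
  then show ?thesis
    by (simp add: sum_subtractf sum.inter_filter[OF finite_E])
qed

definition within_bounds :: "('e \<Rightarrow> int) \<Rightarrow> ('e \<Rightarrow> int) \<Rightarrow> ('e \<Rightarrow> int) \<Rightarrow> bool" where
  "within_bounds l u f \<longleftrightarrow> (\<forall>e\<in>E. l e \<le> f e \<and> f e \<le> u e)"

definition residual :: "('e \<Rightarrow> int) \<Rightarrow> ('e \<Rightarrow> int) \<Rightarrow> ('e \<Rightarrow> int) \<Rightarrow> 'v \<Rightarrow> 'v \<Rightarrow> bool" where
  "residual l u f x y \<longleftrightarrow> (\<exists>e\<in>E. (fst (ends e) = x \<and> snd (ends e) = y \<and> f e < u e) \<or>
                                     (snd (ends e) = x \<and> fst (ends e) = y \<and> l e < f e))"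

definition cut_capacity :: "('e \<Rightarrow> int) \<Rightarrow> ('e \<Rightarrow> int) \<Rightarrow> 'v set \<Rightarrow> int" where
  "cut_capacity l u S =
     (\<Sum>e\<in>E. if fst (ends e) \<in> S \<and> snd (ends e) \<notin> S then u e
             else if fst (ends e) \<notin> S \<and> snd (ends e) \<in> S then - l e else 0)"

lemma residual_in_V: "residual l u f x y \<Longrightarrow> y \<in> V"
  unfolding residual_def using tail_in_V head_in_V by blast

lemma residualE:
  assumes "residual l u f x z" "x \<noteq> z" "within_bounds l u f"
  obtains e c where "e \<in> E" "{fst (ends e), snd (ends e)} = {x, z}"
    and "\<And>v. c * incidence {v} e = (if v = x then 1 else 0) - (if v = z then 1 else 0)"
    and "l e \<le> f e + c" "f e + c \<le> u e"
proof -
  from assms(1) obtain e where e: "e \<in> E" and arc: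
    "(fst (ends e) = x \<and> snd (ends e) = z \<and> f e < u e) \<or> (snd (ends e) = x \<and> fst (ends e) = z \<and> l e < f e)"
    unfolding residual_def by blast
  have "l e \<le> f e" "f e \<le> u e"
    using assms(3) e by (auto simp: within_bounds_def)
  with arc assms(2) show thesis
    by (elim disjE) (rule that[OF e, of 1] that[OF e, of "-1"]; auto simp: incidence_def)+
qed

lemma augment_along_path:
  assumes "rtrancl_path (residual l u f) x xs y" "distinct (x # xs)" "within_bounds l u f"
  shows "\<exists>g. within_bounds l u g
    \<and> (\<forall>v. net_flow g {v} = net_flow f {v} + (if v = x then 1 else 0) - (if v = y then 1 else 0))
    \<and> (\<forall>e\<in>E. g e \<noteq> f e \<longrightarrow> fst (ends e) \<in> set (x # xs) \<and> snd (ends e) \<in> set (x # xs))"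
  using assms
proof (induction rule: rtrancl_path.induct)
  case (base x)
  show ?case
    using base by auto
next
  case (step x z ys y)
  then have "distinct (z # ys)" "x \<notin> set (z # ys)"
    by auto
  with step.IH step.prems(2) obtain g where g: "within_bounds l u g"
    and g_net: "\<forall>v. net_flow g {v} = net_flow f {v} + (if v = z then 1 else 0) - (if v = y then 1 else 0)"
    and g_changed: "\<forall>e\<in>E. g e \<noteq> f e \<longrightarrow> fst (ends e) \<in> set (z # ys) \<and> snd (ends e) \<in> set (z # ys)"
    by blast
  have "x \<noteq> z"
    using step.prems(1) by auto
  obtain e c where e: "e \<in> E" "{fst (ends e), snd (ends e)} = {x, z}"
    and c: "\<And>v. c * incidence {v} e = (if v = x then 1 else 0) - (if v = z then 1 else 0)"
    and bounds: "l e \<le> f e + c" "f e + c \<le> u e"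
    using residualE[OF step.hyps(1) \<open>x \<noteq> z\<close> step.prems(2)] by blast
  have "g e = f e"
    using g_changed e \<open>x \<notin> set (z # ys)\<close> by (metis doubleton_eq_iff insertI1)
  let ?g = "g(e := g e + c)"
  have "within_bounds l u ?g"
    using g bounds \<open>g e = f e\<close> by (auto simp: within_bounds_def)
  moreover have "net_flow ?g {v} = net_flow f {v} + (if v = x then 1 else 0) - (if v = y then 1 else 0)" for v
    using g_net c[of v] \<open>x \<noteq> z\<close> by (auto simp: net_flow_fun_upd[OF e(1)])
  moreover have "\<forall>e'\<in>E. ?g e' \<noteq> f e' \<longrightarrow> fst (ends e') \<in> set (x # z # ys) \<and> snd (ends e') \<in> set (x # z # ys)"
    using g_changed e(2) by (auto simp: doubleton_eq_iff)
  ultimately show ?case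
    by blast
qed

lemma residual_closed_cut:
  assumes "within_bounds l u f" and closed: "\<And>x y. x \<in> R \<Longrightarrow> residual l u f x y \<Longrightarrow> y \<in> R"
  shows "cut_capacity l u R \<le> net_flow f R"
  unfolding cut_capacity_def net_flow_def
proof (rule sum_mono)
  fix e assume e: "e \<in> E"
  show "(if fst (ends e) \<in> R \<and> snd (ends e) \<notin> R then u e
         else if fst (ends e) \<notin> R \<and> snd (ends e) \<in> R then - l e else 0) \<le> f e * incidence R e"
  proof -
    have "fst (ends e) \<in> R \<Longrightarrow> snd (ends e) \<notin> R \<Longrightarrow> u e \<le> f e"
      using closed[of "fst (ends e)" "snd (ends e)"] e by (force simp: residual_def)
    moreover have "snd (ends e) \<in> R \<Longrightarrow> fst (ends e) \<notin> R \<Longrightarrow> f e \<le> l e"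
      using closed[of "snd (ends e)" "fst (ends e)"] e by (force simp: residual_def)
    ultimately show ?thesis
      by (auto simp: incidence_def)
  qed
qed

definition demand_defect :: "('v \<Rightarrow> int) \<Rightarrow> ('e \<Rightarrow> int) \<Rightarrow> nat" where
  "demand_defect b f = (\<Sum>v\<in>V. nat \<bar>net_flow f {v} - b v\<bar>)"

lemma augmenting_path_decreases_defect:
  assumes "within_bounds l u f" "(residual l u f)\<^sup>*\<^sup>* t s"
    and "t \<in> V" "net_flow f {t} < b t" "b s < net_flow f {s}"
  shows "\<exists>g. within_bounds l u g \<and> demand_defect b g < demand_defect b f"
proof -
  obtain xs where "rtrancl_path (residual l u f) t xs s"
    using assms(2) by (auto simp: rtranclp_eq_rtrancl_path)
  then obtain xs' where "rtrancl_path (residual l u f) t xs' s" "distinct (t # xs')"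
    by (rule rtrancl_path_distinct)
  from augment_along_path[OF this assms(1)] obtain g where g: "within_bounds l u g"
    and g_net: "\<And>v. net_flow g {v} = net_flow f {v} + (if v = t then 1 else 0) - (if v = s then 1 else 0)"
    by blast
  have "s \<noteq> t"
    using assms(4,5) by auto
  have "demand_defect b g < demand_defect b f"
    unfolding demand_defect_def
  proof (rule sum_strict_mono_ex1[OF finite_V])
    show "\<forall>v\<in>V. nat \<bar>net_flow g {v} - b v\<bar> \<le> nat \<bar>net_flow f {v} - b v\<bar>"
    proof
      fix v
      show "nat \<bar>net_flow g {v} - b v\<bar> \<le> nat \<bar>net_flow f {v} - b v\<bar>"
        using g_net[of v] assms(4,5) \<open>s \<noteq> t\<close> by (cases "v = t"; cases "v = s") auto
    qed
    show "\<exists>v\<in>V. nat \<bar>net_flow g {v} - b v\<bar> < nat \<bar>net_flow f {v} - b v\<bar>"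
      using g_net assms(3,4) \<open>s \<noteq> t\<close> by (intro bexI[of _ t]) auto
  qed
  with g show ?thesis
    by blast
qed

text \<open>A bounded flow of minimal defect meets all demands: from a vertex t with a deficit,
either a residual path reaches a vertex with a surplus, and augmenting along it lowers the
defect, or the set R of vertices reachable from t violates the cut condition.\<close>

theorem hoffman_circulation:
  assumes "\<forall>e\<in>E. l e \<le> u e" and "sum b V = 0"
    and cut_condition: "\<forall>S\<subseteq>V. sum b S \<le> cut_capacity l u S"
  shows "\<exists>f. within_bounds l u f \<and> (\<forall>v\<in>V. net_flow f {v} = b v)"
proof -
  have "within_bounds l u l"
    using assms(1) by (simp add: within_bounds_def)
  then obtain f where f: "within_bounds l u f"
    and f_min: "\<And>g. within_bounds l u g \<Longrightarrow> demand_defect b f \<le> demand_defect b g"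
    using ex_has_least_nat[of "within_bounds l u" l "demand_defect b"] by blast
  have "\<forall>v\<in>V. net_flow f {v} = b v"
  proof (rule ccontr)
    assume "\<not> (\<forall>v\<in>V. net_flow f {v} = b v)"
    moreover have "(\<Sum>v\<in>V. net_flow f {v} - b v) = 0"
      using assms(2) by (simp add: sum_subtractf sum_net_flow_singletons finite_V net_flow_V)
    ultimately obtain t where t: "t \<in> V" "net_flow f {t} < b t"
      using exists_negative_of_sum_eq_0[OF finite_V, of "\<lambda>v. net_flow f {v} - b v"] by auto
    define R where "R = {x\<in>V. (residual l u f)\<^sup>*\<^sup>* t x}"
    have "t \<in> R" "R \<subseteq> V"
      using t by (auto simp: R_def)
    then have "finite R"
      using finite_V by (auto intro: finite_subset)
    have "\<forall>s\<in>R. net_flow f {s} \<le> b s"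
    proof (rule ballI, rule ccontr)
      fix s
      assume "s \<in> R" "\<not> net_flow f {s} \<le> b s"
      then obtain g where "within_bounds l u g" "demand_defect b g < demand_defect b f"
        using augmenting_path_decreases_defect[of l u f t s b] f t by (auto simp: R_def)
      with f_min show False
        by (meson not_le)
    qed
    with \<open>finite R\<close> \<open>t \<in> R\<close> t have "(\<Sum>v\<in>R. net_flow f {v} - b v) < (\<Sum>v\<in>R. 0)"
      by (intro sum_strict_mono_ex1) auto
    then have "net_flow f R < sum b R"
      using \<open>finite R\<close> by (simp add: sum_subtractf sum_net_flow_singletons)
    moreover have "cut_capacity l u R \<le> net_flow f R"
    proof (rule residual_closed_cut[OF f])
      fix x y
      assume "x \<in> R" "residual l u f x y"
      then show "y \<in> R"
        unfolding R_def using residual_in_V by (blast intro: rtranclp.rtrancl_into_rtrancl)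
    qed
    moreover have "sum b R \<le> cut_capacity l u R"
      using cut_condition \<open>R \<subseteq> V\<close> by blast
    ultimately show False
      by linarith
  qed
  with f show ?thesis
    by blast
qed

lemma net_flow_affine: "net_flow (\<lambda>e. 2 * y e - 1) S = 2 * net_flow y S - net_flow (\<lambda>_. 1) S"
  by (simp add: net_flow_def left_diff_distrib sum_subtractf sum_distrib_left mult.assoc)

lemma cut_capacity_0_1: "2 * cut_capacity (\<lambda>_. 0) (\<lambda>_. 1) S = cut_size S + net_flow (\<lambda>_. 1) S"
proof -
  have "2 * cut_capacity (\<lambda>_. 0) (\<lambda>_. 1) S = (\<Sum>e\<in>E. \<bar>incidence S e\<bar> + incidence S e)"
    unfolding cut_capacity_def sum_distrib_left by (rule sum.cong) (auto simp: incidence_def)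
  then show ?thesis
    by (simp add: sum.distrib cut_size_eq_sum_abs_incidence net_flow_def)
qed

text \<open>The orientation is s = 2y - 1 for a 0/1-valued flow y with net outflow (\<beta> + net_flow 1)/2
at every vertex; the parity hypothesis makes this demand integral.\<close>

theorem orientation_with_prescribed_excess:
  assumes parity: "\<forall>v\<in>V. even (\<beta> v + cut_size {v})" and "sum \<beta> V = 0"
    and cut: "\<forall>S\<subseteq>V. sum \<beta> S \<le> cut_size S"
  shows "\<exists>s. (\<forall>e\<in>E. s e = 1 \<or> s e = -1) \<and> (\<forall>v\<in>V. net_flow s {v} = \<beta> v)"
proof -
  define b where "b v = (\<beta> v + net_flow (\<lambda>_. 1) {v}) div 2" for v
  have b: "2 * b v = \<beta> v + net_flow (\<lambda>_. 1) {v}" if "v \<in> V" for v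
  proof -
    have "even (cut_size {v} + net_flow (\<lambda>_. 1) {v})"
      by (metis cut_capacity_0_1 dvd_triv_left)
    with parity that have "even (\<beta> v + net_flow (\<lambda>_. 1) {v})"
      by auto
    then show ?thesis
      by (simp add: b_def)
  qed
  have sum_b: "2 * sum b S = sum \<beta> S + net_flow (\<lambda>_. 1) S" if "S \<subseteq> V" for S
  proof -
    have "finite S"
      using that finite_V by (rule finite_subset)
    have "2 * sum b S = (\<Sum>v\<in>S. \<beta> v + net_flow (\<lambda>_. 1) {v})"
      unfolding sum_distrib_left using that b by (intro sum.cong) auto
    then show ?thesis
      using \<open>finite S\<close> by (simp add: sum.distrib sum_net_flow_singletons)
  qed
  have "\<forall>S\<subseteq>V. sum b S \<le> cut_capacity (\<lambda>_. 0) (\<lambda>_. 1) S"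
  proof (intro allI impI)
    fix S
    assume "S \<subseteq> V"
    with sum_b[of S] cut cut_capacity_0_1[of S]
    show "sum b S \<le> cut_capacity (\<lambda>_. 0) (\<lambda>_. 1) S"
      by auto
  qed
  moreover have "sum b V = 0"
    using sum_b[of V] assms(2) by (simp add: net_flow_V)
  ultimately obtain y where y: "within_bounds (\<lambda>_. 0) (\<lambda>_. 1) y" and y_net: "\<forall>v\<in>V. net_flow y {v} = b v"
    using hoffman_circulation[of "\<lambda>_. 0" "\<lambda>_. 1" b] by auto
  have "y e = 0 \<or> y e = 1" if "e \<in> E" for e
    using y that by (auto simp: within_bounds_def)
  moreover have "net_flow (\<lambda>e. 2 * y e - 1) {v} = \<beta> v" if "v \<in> V" for v
    using b[OF that] y_net that by (simp add: net_flow_affine)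
  ultimately show ?thesis
    by (intro exI[of _ "\<lambda>e. 2 * y e - 1"]) auto
qed

text \<open>An orientation is encoded by signs: s e = 1 keeps the reference direction fst \<rightarrow> snd of e,
s e = -1 reverses it, so that net_flow s S counts the edges leaving S minus those entering S.\<close>

definition balanced_orientation :: "('e \<Rightarrow> int) \<Rightarrow> bool" where
  "balanced_orientation s \<longleftrightarrow> (\<forall>e\<in>E. s e = 1 \<or> s e = -1) \<and>
     (\<forall>S\<subseteq>V. S \<noteq> {} \<longrightarrow> S \<noteq> V \<longrightarrow> 3 * \<bar>net_flow s S\<bar> < cut_size S)"

lemma net_flow_empty: "net_flow f {} = 0"
  by (simp add: net_flow_def incidence_def)

lemma cut_capacity_of_orientation:
  assumes "\<forall>e\<in>E. s e = 1 \<or> s e = -1"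
  shows "2 * cut_capacity (\<lambda>e. if s e = 1 then d else 1 - 2 * d) (\<lambda>e. if s e = 1 then 2 * d - 1 else - d) S
       = (d - 1) * cut_size S + (3 * d - 1) * net_flow s S"
proof -
  have "2 * cut_capacity (\<lambda>e. if s e = 1 then d else 1 - 2 * d) (\<lambda>e. if s e = 1 then 2 * d - 1 else - d) S
      = (\<Sum>e\<in>E. (d - 1) * \<bar>incidence S e\<bar> + (3 * d - 1) * (s e * incidence S e))"
    unfolding cut_capacity_def sum_distrib_left using assms
    by (intro sum.cong) (auto simp: incidence_def algebra_simps)
  then show ?thesis
    by (simp add: sum.distrib sum_distrib_left cut_size_eq_sum_abs_incidence net_flow_def)
qed

text \<open>The flow is sought in [d, 2d-1] along every oriented edge. With C = d(S) and B = \<beta>(S),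
the cut condition reads (d-1) C + (3d-1) B \<ge> 0, i.e. d (C + 3B) \<ge> C + B, which holds
because C + 3B \<ge> 1 for a balanced orientation and C + B < 2 |E| + 1 = d.\<close>

theorem circular_flow_of_balanced_orientation:
  assumes "balanced_orientation s"
  shows "\<exists>d>0. circular_flow V E ends (3 * d - 1) d"
proof -
  define d where "d = 2 * int (card E) + 1"
  define l where "l = (\<lambda>e. if s e = 1 then d else 1 - 2 * d)"
  define u where "u = (\<lambda>e. if s e = 1 then 2 * d - 1 else - d)"
  have orientation: "\<forall>e\<in>E. s e = 1 \<or> s e = -1"
    using assms by (simp add: balanced_orientation_def)
  have "0 \<le> cut_capacity l u S" if "S \<subseteq> V" for S
  proof (cases "S = {} \<or> S = V")
    case True
    then show ?thesis
      using cut_capacity_of_orientation[OF orientation, of d S]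
      by (auto simp: l_def u_def cut_size_empty cut_size_V net_flow_empty net_flow_V)
  next
    case False
    then have lt: "3 * \<bar>net_flow s S\<bar> < cut_size S"
      using assms that by (auto simp: balanced_orientation_def)
    have "d * 1 \<le> d * (cut_size S + 3 * net_flow s S)"
      using lt by (intro mult_left_mono) (auto simp: d_def)
    moreover have "cut_size S \<le> int (card E)"
      by (rule cut_size_le_card_E)
    ultimately have "0 \<le> (d - 1) * cut_size S + (3 * d - 1) * net_flow s S"
      using lt by (simp add: algebra_simps d_def)
    then show ?thesis
      using cut_capacity_of_orientation[OF orientation, of d S] by (simp add: l_def u_def)
  qed
  moreover have "\<forall>e\<in>E. l e \<le> u e"
    by (simp add: l_def u_def d_def)
  ultimately obtain f where f: "within_bounds l u f" and f_net: "\<forall>v\<in>V. net_flow f {v} = 0"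
    using hoffman_circulation[of l u "\<lambda>_. 0"] by auto
  have "circular_flow V E ends (3 * d - 1) d"
    unfolding circular_flow_def
  proof (intro exI[of _ f] conjI ballI)
    fix e
    assume "e \<in> E"
    with f have "l e \<le> f e" "f e \<le> u e"
      by (auto simp: within_bounds_def)
    moreover have "1 \<le> d"
      by (simp add: d_def)
    ultimately show "d \<le> \<bar>f e\<bar>" "\<bar>f e\<bar> \<le> 3 * d - 1 - d"
      using orientation \<open>e \<in> E\<close> by (auto simp: l_def u_def)
  next
    fix v
    assume "v \<in> V"
    then show "(\<Sum>e\<in>{e\<in>E. fst (ends e) = v}. f e) = (\<Sum>e\<in>{e\<in>E. snd (ends e) = v}. f e)"
      using f_net net_flow_singleton[of f v] by simp
  qed
  then show ?thesis
    by (intro exI[of _ d]) (simp add: d_def)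
qed

lemma k_edge_connected_cut_size:
  assumes "k_edge_connected k V E ends" "S \<subseteq> V" "S \<noteq> {}" "S \<noteq> V"
  shows "int k \<le> cut_size S"
  using assms by (simp add: k_edge_connected_def cut_size_def)

lemma sum_cut_size_singletons:
  assumes "finite S"
  shows "(\<Sum>v\<in>S. cut_size {v})
       = (\<Sum>e\<in>E. (if fst (ends e) \<in> S then 1 else 0) + (if snd (ends e) \<in> S then 1 else 0))"
proof -
  have "\<bar>incidence {v} e\<bar> = (if fst (ends e) = v then 1 else 0) + (if snd (ends e) = v then 1 else 0)"
    if "e \<in> E" for e v
    using tail_neq_head[OF that] by (auto simp: incidence_def)
  then have "(\<Sum>v\<in>S. \<bar>incidence {v} e\<bar>)
           = (if fst (ends e) \<in> S then 1 else 0) + (if snd (ends e) \<in> S then 1 else 0)" if "e \<in> E" for e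
    using assms that by (simp add: sum.distrib sum.delta')
  moreover have "(\<Sum>v\<in>S. cut_size {v}) = (\<Sum>e\<in>E. \<Sum>v\<in>S. \<bar>incidence {v} e\<bar>)"
    unfolding cut_size_eq_sum_abs_incidence by (rule sum.swap)
  ultimately show ?thesis
    by simp
qed

lemma even_card_odd_degree: "even (card {v\<in>V. odd (cut_size {v})})"
proof -
  have "(\<Sum>v\<in>V. cut_size {v}) = (\<Sum>e\<in>E. 2)"
    by (simp add: sum_cut_size_singletons finite_V tail_in_V head_in_V)
  then show ?thesis
    using even_sum_iff[OF finite_V, of "\<lambda>v. cut_size {v}"] by simp
qed

lemma cut_size_star:
  assumes "distinct [p,q,r,s]"
  shows "cut_size {p} + cut_size {q} + cut_size {r} + cut_size {s}
       \<le> cut_size {p,q} + cut_size {p,r} + cut_size {p,s}"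
proof -
  have "cut_size {p} + cut_size {q} + cut_size {r} + cut_size {s} = (\<Sum>v\<in>{p,q,r,s}. cut_size {v})"
    using assms by simp
  also have "\<dots> = (\<Sum>e\<in>E. (if fst (ends e) \<in> {p,q,r,s} then 1 else 0) + (if snd (ends e) \<in> {p,q,r,s} then 1 else 0))"
    by (simp add: sum_cut_size_singletons)
  also have "\<dots> \<le> (\<Sum>e\<in>E. \<bar>incidence {p,q} e\<bar> + \<bar>incidence {p,r} e\<bar> + \<bar>incidence {p,s} e\<bar>)"
  proof (rule sum_mono)
    fix e
    assume "e \<in> E"
    then show "(if fst (ends e) \<in> {p,q,r,s} then 1 else 0) + (if snd (ends e) \<in> {p,q,r,s} then 1 else 0)
             \<le> \<bar>incidence {p,q} e\<bar> + \<bar>incidence {p,r} e\<bar> + \<bar>incidence {p,s} e\<bar>"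
      using assms tail_neq_head[of e] by (auto simp: incidence_def)
  qed
  also have "\<dots> = cut_size {p,q} + cut_size {p,r} + cut_size {p,s}"
    by (simp add: cut_size_eq_sum_abs_incidence sum.distrib)
  finally show ?thesis .
qed

lemma cut_size_triangle:
  assumes "distinct [p,q,r]"
  shows "cut_size {p,q} + cut_size {q,r} + cut_size {p,r}
       = cut_size {p} + cut_size {q} + cut_size {r} + cut_size {p,q,r}"
proof -
  have "cut_size {p,q} + cut_size {q,r} + cut_size {p,r}
      = (\<Sum>e\<in>E. \<bar>incidence {p,q} e\<bar> + \<bar>incidence {q,r} e\<bar> + \<bar>incidence {p,r} e\<bar>)"
    by (simp add: cut_size_eq_sum_abs_incidence sum.distrib)
  also have "\<dots> = (\<Sum>e\<in>E. ((if fst (ends e) \<in> {p,q,r} then 1 else 0) + (if snd (ends e) \<in> {p,q,r} then 1 else 0))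
                          + \<bar>incidence {p,q,r} e\<bar>)"
    using assms tail_neq_head by (intro sum.cong) (fastforce simp: incidence_def)+
  also have "\<dots> = (\<Sum>e\<in>E. (if fst (ends e) \<in> {p,q,r} then 1 else 0) + (if snd (ends e) \<in> {p,q,r} then 1 else 0))
                   + cut_size {p,q,r}"
    by (simp add: sum.distrib cut_size_eq_sum_abs_incidence)
  also have "\<dots> = (\<Sum>v\<in>{p,q,r}. cut_size {v}) + cut_size {p,q,r}"
    by (simp only: sum_cut_size_singletons finite.emptyI finite.insertI)
  also have "\<dots> = cut_size {p} + cut_size {q} + cut_size {r} + cut_size {p,q,r}"
    using assms by simp
  finally show ?thesis .
qed

text \<open>Otherwise each of the three perfect matchings of {a,b,c,d} has a pair with cut at most 6.
Three such pairs form a star or a triangle, against the lower bounds 20 and 19 given by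
cut_size_star and cut_size_triangle.\<close>

lemma large_cut_pairs:
  assumes "distinct [a,b,c,d]"
    and "5 \<le> cut_size {a}" "5 \<le> cut_size {b}" "5 \<le> cut_size {c}" "5 \<le> cut_size {d}"
    and "4 \<le> cut_size {a,b,c}" "4 \<le> cut_size {a,b,d}" "4 \<le> cut_size {a,c,d}" "4 \<le> cut_size {b,c,d}"
  shows "\<exists>p q r s. distinct [p,q,r,s] \<and> {p,q,r,s} = {a,b,c,d} \<and> 7 \<le> cut_size {p,q} \<and> 7 \<le> cut_size {r,s}"
proof (rule ccontr)
  assume no_pairs: "\<not> ?thesis"
  have small: "cut_size {p,q} \<le> 6 \<or> cut_size {r,s} \<le> 6"
    if "distinct [p,q,r,s]" "{p,q,r,s} = {a,b,c,d}" for p q r s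
    using no_pairs that by fastforce
  have "cut_size {a,b} \<le> 6 \<or> cut_size {c,d} \<le> 6" "cut_size {a,c} \<le> 6 \<or> cut_size {b,d} \<le> 6"
    "cut_size {a,d} \<le> 6 \<or> cut_size {b,c} \<le> 6"
    using small[of a b c d] small[of a c b d] small[of a d b c] assms(1) by (auto simp: insert_commute)
  moreover have "20 \<le> cut_size {a,b} + cut_size {a,c} + cut_size {a,d}"
    using cut_size_star[of a b c d] assms by simp
  moreover have "20 \<le> cut_size {a,b} + cut_size {b,c} + cut_size {b,d}"
    using cut_size_star[of b a c d] assms by (auto simp: insert_commute)
  moreover have "20 \<le> cut_size {a,c} + cut_size {b,c} + cut_size {c,d}"
    using cut_size_star[of c a b d] assms by (auto simp: insert_commute)
  moreover have "20 \<le> cut_size {a,d} + cut_size {b,d} + cut_size {c,d}"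
    using cut_size_star[of d a b c] assms by (auto simp: insert_commute)
  moreover have "19 \<le> cut_size {a,b} + cut_size {b,c} + cut_size {a,c}"
    using cut_size_triangle[of a b c] assms by simp
  moreover have "19 \<le> cut_size {a,b} + cut_size {b,d} + cut_size {a,d}"
    using cut_size_triangle[of a b d] assms by simp
  moreover have "19 \<le> cut_size {a,c} + cut_size {c,d} + cut_size {a,d}"
    using cut_size_triangle[of a c d] assms by simp
  moreover have "19 \<le> cut_size {b,c} + cut_size {c,d} + cut_size {b,d}"
    using cut_size_triangle[of b c d] assms by simp
  ultimately show False
    by linarith
qed

lemma pairing_cut_bound:
  assumes conn: "k_edge_connected 4 V E ends"
    and "P \<subseteq> V" "N \<subseteq> V" "card P = card N" "card P \<le> 2"
    and separated: "\<And>S. S \<subseteq> V \<Longrightarrow> S \<noteq> {} \<Longrightarrow> S \<noteq> V \<Longrightarrow> P \<subseteq> S \<Longrightarrow> S \<inter> N = {}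
                     \<Longrightarrow> 3 * int (card P) < cut_size S"
    and S: "S \<subseteq> V" "S \<noteq> {}" "S \<noteq> V"
  shows "3 * \<bar>int (card (S \<inter> P)) - int (card (S \<inter> N))\<bar> < cut_size S"
proof -
  have "finite P" "finite N"
    using assms(2,3) finite_V by (auto intro: finite_subset)
  define \<delta> where "\<delta> = int (card (S \<inter> P)) - int (card (S \<inter> N))"
  have "card (S \<inter> P) \<le> card P" "card (S \<inter> N) \<le> card N"
    by (simp_all add: \<open>finite P\<close> \<open>finite N\<close> card_mono)
  then consider "\<bar>\<delta>\<bar> \<le> 1"
    | "card (S \<inter> P) = card P" "card (S \<inter> N) = 0" | "card (S \<inter> P) = 0" "card (S \<inter> N) = card N"
    using assms(4,5) unfolding \<delta>_def by linarith
  then have "3 * \<bar>\<delta>\<bar> < cut_size S"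
  proof cases
    case 1
    have "4 \<le> cut_size S"
      using k_edge_connected_cut_size[OF conn S] by (simp only: of_nat_numeral)
    with 1 show "3 * \<bar>\<delta>\<bar> < cut_size S"
      by linarith
  next
    case 2
    have "S \<inter> P = P"
      using card_subset_eq[OF \<open>finite P\<close> Int_lower2 2(1)] .
    moreover have "S \<inter> N = {}"
      using 2(2) \<open>finite N\<close> by simp
    ultimately have "P \<subseteq> S" "S \<inter> N = {}"
      by blast+
    then show "3 * \<bar>\<delta>\<bar> < cut_size S"
      using separated[OF S] 2 by (simp add: \<delta>_def)
  next
    case 3
    have "S \<inter> N = N"
      using card_subset_eq[OF \<open>finite N\<close> Int_lower2 3(2)] .
    moreover have "S \<inter> P = {}"
      using 3(1) \<open>finite P\<close> by simp
    ultimately have "P \<subseteq> V - S" "(V - S) \<inter> N = {}"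
      using assms(2) by blast+
    moreover have "V - S \<subseteq> V" "V - S \<noteq> {}" "V - S \<noteq> V"
      using S by auto
    ultimately show "3 * \<bar>\<delta>\<bar> < cut_size S"
      using separated[of "V - S"] 3 assms(4) by (simp add: cut_size_Diff \<delta>_def)
  qed
  then show ?thesis
    by (simp add: \<delta>_def)
qed

lemma balanced_orientation_of_pairing:
  assumes conn: "k_edge_connected 4 V E ends"
    and P_N: "P \<inter> N = {}" "P \<union> N = {v\<in>V. odd (cut_size {v})}" "card P = card N" "card P \<le> 2"
    and separated: "\<And>S. S \<subseteq> V \<Longrightarrow> S \<noteq> {} \<Longrightarrow> S \<noteq> V \<Longrightarrow> P \<subseteq> S \<Longrightarrow> S \<inter> N = {}
                     \<Longrightarrow> 3 * int (card P) < cut_size S"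
  shows "\<exists>s. balanced_orientation s"
proof -
  have "P \<subseteq> V" "N \<subseteq> V"
    using P_N(2) by auto
  define \<beta> where "\<beta> v = (if v \<in> P then 1 else 0) - (if v \<in> N then 1 else (0::int))" for v
  have sum_\<beta>: "sum \<beta> S = int (card (S \<inter> P)) - int (card (S \<inter> N))" if "finite S" for S
    using that by (simp add: \<beta>_def sum_subtractf sum.If_cases)
  have bound: "3 * \<bar>sum \<beta> S\<bar> < cut_size S" if "S \<subseteq> V" "S \<noteq> {}" "S \<noteq> V" for S
    unfolding sum_\<beta>[OF finite_subset[OF \<open>S \<subseteq> V\<close> finite_V]]
    by (rule pairing_cut_bound[OF conn \<open>P \<subseteq> V\<close> \<open>N \<subseteq> V\<close> P_N(3,4) separated that])
  have "\<forall>v\<in>V. even (\<beta> v + cut_size {v})"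
    using P_N(1,2) by (auto simp: \<beta>_def set_eq_iff)
  moreover have "sum \<beta> V = 0"
    using sum_\<beta>[OF finite_V] P_N(3) by (simp only: Int_absorb1[OF \<open>P \<subseteq> V\<close>] Int_absorb1[OF \<open>N \<subseteq> V\<close>])
  moreover have "\<forall>S\<subseteq>V. sum \<beta> S \<le> cut_size S"
  proof (intro allI impI)
    fix S
    assume "S \<subseteq> V"
    show "sum \<beta> S \<le> cut_size S"
    proof (cases "S = {} \<or> S = V")
      case True
      then show ?thesis
        using \<open>sum \<beta> V = 0\<close> by (auto simp: cut_size_V cut_size_empty)
    next
      case False
      then show ?thesis
        using bound[OF \<open>S \<subseteq> V\<close>] by auto
    qed
  qed
  ultimately obtain s where s: "\<forall>e\<in>E. s e = 1 \<or> s e = -1" and s_net: "\<forall>v\<in>V. net_flow s {v} = \<beta> v"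
    using orientation_with_prescribed_excess by blast
  have "net_flow s S = sum \<beta> S" if "S \<subseteq> V" for S
  proof -
    have "net_flow s S = (\<Sum>v\<in>S. net_flow s {v})"
      using sum_net_flow_singletons[OF finite_subset[OF that finite_V]] by simp
    also have "\<dots> = sum \<beta> S"
      using that s_net by (intro sum.cong) auto
    finally show ?thesis .
  qed
  with s bound show ?thesis
    unfolding balanced_orientation_def by (intro exI[of _ s]) auto
qed

lemma balanced_orientation_four_odd_vertices:
  assumes conn: "k_edge_connected 4 V E ends" and "card V \<le> 5"
    and odd: "{v\<in>V. odd (cut_size {v})} = {a,b,c,d}" and abcd: "distinct [a,b,c,d]"
  shows "\<exists>s. balanced_orientation s"
proof -
  have abcd_V: "a \<in> V" "b \<in> V" "c \<in> V" "d \<in> V"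
    using odd by auto
  have cut4: "4 \<le> cut_size S" if "S \<subseteq> V" "S \<noteq> {}" "w \<in> V" "w \<notin> S" for S w
    using k_edge_connected_cut_size[OF conn \<open>S \<subseteq> V\<close> \<open>S \<noteq> {}\<close>] that by (auto simp only: of_nat_numeral)
  have single: "5 \<le> cut_size {x}" if "x \<in> {a,b,c,d}" "w \<in> {a,b,c,d}" "w \<noteq> x" for x w
  proof -
    have "4 \<le> cut_size {x}"
      using cut4[of "{x}" w] that abcd_V by auto
    moreover have "odd (cut_size {x})"
      using odd that(1) by blast
    ultimately show ?thesis
      by presburger
  qed
  have "5 \<le> cut_size {a}" "5 \<le> cut_size {b}" "5 \<le> cut_size {c}" "5 \<le> cut_size {d}"
    using single[of a b] single[of b a] single[of c a] single[of d a] abcd by auto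
  moreover have "4 \<le> cut_size {a,b,c}" "4 \<le> cut_size {a,b,d}" "4 \<le> cut_size {a,c,d}" "4 \<le> cut_size {b,c,d}"
    using cut4[of "{a,b,c}" d] cut4[of "{a,b,d}" c] cut4[of "{a,c,d}" b] cut4[of "{b,c,d}" a] abcd abcd_V
    by auto
  ultimately obtain p q r s where pqrs: "distinct [p,q,r,s]" "{p,q,r,s} = {a,b,c,d}"
    and large: "7 \<le> cut_size {p,q}" "7 \<le> cut_size {r,s}"
    using large_cut_pairs[OF abcd] by blast
  have "{p,q} \<union> {r,s} = {v\<in>V. odd (cut_size {v})}"
    unfolding odd pqrs(2)[symmetric] by auto
  moreover have "{p,q} \<inter> {r,s} = {}" "card {p,q} = card {r,s}" "card {p,q} \<le> 2"
    using pqrs(1) by auto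
  moreover have "{p,q,r,s} \<subseteq> V"
    using pqrs(2) abcd_V by auto
  ultimately show ?thesis
  proof (intro balanced_orientation_of_pairing[OF conn])
    fix S
    assume "S \<subseteq> V" "{p,q} \<subseteq> S" "S \<inter> {r,s} = {}"
    then have "p \<in> S" "q \<in> S" "r \<notin> S" "s \<notin> S"
      by auto
    with \<open>{p,q,r,s} \<subseteq> V\<close> \<open>S \<subseteq> V\<close> have "S = {p,q} \<or> V - S = {r,s}"
      using separating_set_of_five[OF finite_V \<open>card V \<le> 5\<close> pqrs(1)] by blast
    then have "7 \<le> cut_size S"
      using large cut_size_Diff[of S] by (elim disjE) simp_all
    then show "3 * int (card {p,q}) < cut_size S"
      using pqrs(1) by simp
  qed
qed

theorem exists_balanced_orientation:
  assumes conn: "k_edge_connected 4 V E ends" and "card V \<le> 5"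
  shows "\<exists>s. balanced_orientation s"
proof -
  have cut4: "4 \<le> cut_size S" if "S \<subseteq> V" "S \<noteq> {}" "S \<noteq> V" for S
    using k_edge_connected_cut_size[OF conn that] by (simp only: of_nat_numeral)
  define T where "T = {v\<in>V. odd (cut_size {v})}"
  have "finite T"
    using finite_V by (simp add: T_def)
  then obtain xs where xs: "set xs = T" "distinct xs"
    using finite_distinct_list by blast
  have "card T \<le> 5"
    using card_mono[OF finite_V, of T] \<open>card V \<le> 5\<close> by (auto simp: T_def)
  moreover have "even (card T)"
    using even_card_odd_degree by (simp add: T_def)
  moreover have "length xs = card T"
    using distinct_card[OF xs(2)] xs(1) by simp
  ultimately have "length xs = 0 \<or> length xs = 2 \<or> length xs = 4"
    by presburger
  then consider "T = {}" | a b where "T = {a,b}" "a \<noteq> b" | a b c d where "T = {a,b,c,d}" "distinct [a,b,c,d]"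
    using xs by (auto simp: length_Suc_conv numeral_eq_Suc)
  then show ?thesis
  proof cases
    case 1
    have "3 * int (card {}) < cut_size S" if "S \<subseteq> V" "S \<noteq> {}" "S \<noteq> V" for S
      using cut4[OF that] by simp
    then show ?thesis
      using balanced_orientation_of_pairing[OF conn, of "{}" "{}"] 1 by (simp add: T_def)
  next
    case (2 a b)
    have "3 * int (card {a}) < cut_size S" if "S \<subseteq> V" "S \<noteq> {}" "S \<noteq> V" for S
      using cut4[OF that] by simp
    then show ?thesis
      using balanced_orientation_of_pairing[OF conn, of "{a}" "{b}"] 2 by (simp add: T_def insert_commute)
  next
    case (3 a b c d)
    then show ?thesis
      using balanced_orientation_four_odd_vertices[OF conn \<open>card V \<le> 5\<close>] by (simp add: T_def)
  qed
qed

end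

lemma flow_index_le:
  assumes "circular_flow V E ends k d" "0 < d" "2 * d \<le> k"
  shows "flow_index V E ends \<le> real_of_int k / real_of_int d"
proof (unfold flow_index_def, rule cInf_lower)
  show "real_of_int k / real_of_int d
    \<in> {real_of_int k / real_of_int d | k d. 0 < d \<and> 2 * d \<le> k \<and> circular_flow V E ends k d}"
    using assms by blast
  show "bdd_below {real_of_int k / real_of_int d | k d. 0 < d \<and> 2 * d \<le> k \<and> circular_flow V E ends k d}"
    by (rule bdd_belowI[of _ 0]) auto
qed

theorem mainTheorem14:
  fixes V :: "'v set" and E :: "'e set" and ends :: "'e \<Rightarrow> 'v \<times> 'v"
  assumes "multigraph V E ends"
    and "k_edge_connected 4 V E ends"
    and "card V \<le> 5"
  shows "flow_index V E ends < 3"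
proof -
  interpret loopless_multigraph V E ends
    by (rule loopless_multigraph.intro) (rule assms(1))
  obtain s where "balanced_orientation s"
    using exists_balanced_orientation[OF assms(2,3)] by blast
  then obtain d where "0 < d" "circular_flow V E ends (3 * d - 1) d"
    using circular_flow_of_balanced_orientation by blast
  then have "flow_index V E ends \<le> real_of_int (3 * d - 1) / real_of_int d"
    by (intro flow_index_le) auto
  also have "\<dots> < 3"
    using \<open>0 < d\<close> by (simp add: divide_less_eq)
  finally show ?thesis .
qed

end
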